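(* Let $q=2^n$, let $B$ be a $k$-subset of $\mathrm{GF}(q)$ with $k\ge 3$, and let $\mathcal B=\mathrm{GA}_1(q)(B)$. For pairwise distinct $u_1,u_2,u_3\in\mathrm{GF}(q)$ define $I_B(u_1,u_2,u_3)=|\{(x,y)\in\mathrm{GF}(q)^2: u_ix+y\in B\ (i=1,2,3)\}|$. Then $(\mathrm{GF}(q),\mathcal B)$ is a $3$-design if and only if $I_B(u_1,u_2,u_3)$ is independent of the specific choice of the pairwise distinct elements $u_1,u_2,u_3$.
   Context: $\mathrm{GA}_1(q)$ is the group of permutations $\pi_{a,b}(x)=ax+b$ of $\mathrm{GF}(q)$ with $(a,b)\in\mathrm{GF}(q)^*\times\mathrm{GF}(q)$; for $B\subseteq\mathrm{GF}(q)$, $\mathrm{GA}_1(q)(B)=\{\pi(B):\pi\in\mathrm{GA}_1(q)\}$ is the orbit of $B$ (a set of $k$-subsets). A pair $(\mathcal P,\mathcal B)$ with $\mathcal B$ a set of $k$-subsets of $\mathcal P$ is a $3$-design if every $3$-subset of $\mathcal P$ is contained in exactly $\lambda$ members of $\mathcal B$, for some constant $\lambda$. *)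

theory Defs
  imports Main
begin

definition GA1_orbit :: "'a::field set \<Rightarrow> 'a set set" where
  "GA1_orbit B = {(\<lambda>x. a * x + b) ` B | a b. a \<noteq> 0}"

definition is_3_design :: "'a set \<Rightarrow> 'a set set \<Rightarrow> nat \<Rightarrow> bool" where
  "is_3_design P Bs k \<longleftrightarrow>
     (\<forall>X\<in>Bs. X \<subseteq> P \<and> card X = k) \<and>
     (\<exists>lam. \<forall>T. T \<subseteq> P \<and> card T = 3 \<longrightarrow> card {X \<in> Bs. T \<subseteq> X} = lam)"

definition I_B :: "'a::field set \<Rightarrow> 'a \<Rightarrow> 'a \<Rightarrow> 'a \<Rightarrow> nat" where
  "I_B B u1 u2 u3 = card {(x, y). u1 * x + y \<in> B \<and> u2 * x + y \<in> B \<and> u3 * x + y \<in> B}"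

end

theory Submission
  imports Defs
begin

text \<open>Let the affine group \<open>G\<close> act on \<open>GF(q)\<close> by \<open>(a,b) \<cdot> x = a x + b\<close>.
  Solutions \<open>(x, y)\<close> of \<open>u\<^sub>i x + y \<in> B\<close> with \<open>x = 0\<close> are just \<open>y \<in> B\<close>; those with
  \<open>x \<noteq> 0\<close> correspond, via \<open>g \<mapsto> g\<inverse>\<close>, to the \<open>g \<in> G\<close> with \<open>{u\<^sub>1,u\<^sub>2,u\<^sub>3} \<subseteq> g B\<close>.
  Grouping these \<open>g\<close> by the block \<open>g B\<close>, each block of the orbit arises from exactly
  \<open>|Stab(B)|\<close> elements (a coset of the stabiliser).  Hence
  \<open>I\<^sub>B(u\<^sub>1,u\<^sub>2,u\<^sub>3) = k + |Stab(B)| \<cdot> \<lambda>(u\<^sub>1,u\<^sub>2,u\<^sub>3)\<close>, where \<open>\<lambda>\<close> counts the blocks through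
  \<open>{u\<^sub>1,u\<^sub>2,u\<^sub>3}\<close>, and one is constant iff the other is.  Neither the characteristic
  nor \<open>k \<ge> 3\<close> plays a role.\<close>

definition affine_group :: "('a::field \<times> 'a) set" where
  "affine_group = {g. fst g \<noteq> 0}"

definition affine_map :: "'a::field \<times> 'a \<Rightarrow> 'a \<Rightarrow> 'a" where
  "affine_map g x = fst g * x + snd g"

definition affine_comp :: "'a::field \<times> 'a \<Rightarrow> 'a \<times> 'a \<Rightarrow> 'a \<times> 'a" where
  "affine_comp g h = (fst g * fst h, fst g * snd h + snd g)"

definition affine_inv :: "'a::field \<times> 'a \<Rightarrow> 'a \<times> 'a" where
  "affine_inv g = (inverse (fst g), - snd g / fst g)"

definition affine_stabilizer :: "'a::field set \<Rightarrow> ('a \<times> 'a) set" where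
  "affine_stabilizer B = {g \<in> affine_group. affine_map g ` B = B}"

lemma affine_map_comp: "affine_map (affine_comp g h) = affine_map g \<circ> affine_map h"
  by (auto simp: affine_map_def affine_comp_def algebra_simps)

lemma affine_comp_in_group:
  "g \<in> affine_group \<Longrightarrow> h \<in> affine_group \<Longrightarrow> affine_comp g h \<in> affine_group"
  by (simp add: affine_group_def affine_comp_def)

lemma affine_inv_in_group: "g \<in> affine_group \<Longrightarrow> affine_inv g \<in> affine_group"
  by (simp add: affine_group_def affine_inv_def)

lemma affine_inv_inv: "g \<in> affine_group \<Longrightarrow> affine_inv (affine_inv g) = g"
  by (simp add: affine_group_def affine_inv_def)

lemma affine_comp_inv_left:
  "g \<in> affine_group \<Longrightarrow> affine_comp (affine_inv g) (affine_comp g h) = h"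
  by (simp add: affine_group_def affine_inv_def affine_comp_def field_simps)

lemma affine_comp_inv_right:
  "g \<in> affine_group \<Longrightarrow> affine_comp g (affine_comp (affine_inv g) h) = h"
  by (simp add: affine_group_def affine_inv_def affine_comp_def field_simps)

lemma affine_map_inv_cancel:
  "g \<in> affine_group \<Longrightarrow> affine_map (affine_inv g) (affine_map g x) = x"
  by (simp add: affine_group_def affine_inv_def affine_map_def field_simps)

lemma affine_map_inv_cancel':
  "g \<in> affine_group \<Longrightarrow> affine_map g (affine_map (affine_inv g) x) = x"
  by (simp add: affine_group_def affine_inv_def affine_map_def field_simps)

lemma mem_affine_image_iff:
  assumes "g \<in> affine_group"
  shows "u \<in> affine_map g ` B \<longleftrightarrow> affine_map (affine_inv g) u \<in> B"
  using affine_map_inv_cancel[OF assms] affine_map_inv_cancel'[OF assms]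
  by (metis image_eqI imageE)

lemma inj_affine_map: "g \<in> affine_group \<Longrightarrow> inj (affine_map g)"
  by (metis affine_map_inv_cancel injI)

lemma GA1_orbit_eq_image: "GA1_orbit B = (\<lambda>g. affine_map g ` B) ` affine_group"
  unfolding GA1_orbit_def affine_group_def affine_map_def
  by (auto simp: image_iff) (metis fst_conv snd_conv)

lemma card_GA1_orbit_member: "X \<in> GA1_orbit B \<Longrightarrow> card X = card B"
  by (auto simp: GA1_orbit_eq_image card_image inj_on_subset[OF inj_affine_map])

lemma affine_image_comp:
  "affine_map (affine_comp g h) ` B = affine_map g ` (affine_map h ` B)"
  by (simp add: affine_map_comp image_comp)

lemma affine_image_eq_iff_stabilizer:
  assumes "g0 \<in> affine_group" "g \<in> affine_group"
  shows "affine_map g ` B = affine_map g0 ` B \<longleftrightarrow>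
         affine_comp (affine_inv g0) g \<in> affine_stabilizer B"
proof -
  have cancel: "affine_map (affine_inv g0) ` (affine_map g0 ` X) = X" for X
    using affine_map_inv_cancel[OF assms(1)] by (simp add: image_image)
  have cancel': "affine_map g0 ` (affine_map (affine_inv g0) ` X) = X" for X
    using affine_map_inv_cancel'[OF assms(1)] by (simp add: image_image)
  have "affine_map g ` B = affine_map g0 ` B \<longleftrightarrow>
        affine_map (affine_inv g0) ` (affine_map g ` B) = B"
    by (metis cancel cancel')
  then show ?thesis
    using affine_comp_in_group[OF affine_inv_in_group[OF assms(1)] assms(2)]
    by (simp add: affine_stabilizer_def affine_image_comp)
qed

lemma card_affine_image_fiber:
  fixes B :: "'a::{finite,field} set"
  assumes "g0 \<in> affine_group"
  shows "card {g \<in> affine_group. affine_map g ` B = affine_map g0 ` B} = card (affine_stabilizer B)"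
proof -
  have "bij_betw (affine_comp (affine_inv g0))
          {g \<in> affine_group. affine_map g ` B = affine_map g0 ` B} (affine_stabilizer B)"
  proof (rule bij_betw_byWitness[where f' = "affine_comp g0"])
    show "\<forall>g\<in>{g \<in> affine_group. affine_map g ` B = affine_map g0 ` B}.
            affine_comp g0 (affine_comp (affine_inv g0) g) = g"
      using affine_comp_inv_right[OF assms] by blast
    show "\<forall>h\<in>affine_stabilizer B. affine_comp (affine_inv g0) (affine_comp g0 h) = h"
      using affine_comp_inv_left[OF assms] by blast
    show "affine_comp (affine_inv g0) ` {g \<in> affine_group. affine_map g ` B = affine_map g0 ` B}
          \<subseteq> affine_stabilizer B"
      using affine_image_eq_iff_stabilizer[OF assms] by blast
    show "affine_comp g0 ` affine_stabilizer B
          \<subseteq> {g \<in> affine_group. affine_map g ` B = affine_map g0 ` B}"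
    proof
      fix g assume "g \<in> affine_comp g0 ` affine_stabilizer B"
      then obtain h where h: "h \<in> affine_stabilizer B" "g = affine_comp g0 h"
        by blast
      then have "g \<in> affine_group"
        using affine_comp_in_group[OF assms] by (simp add: affine_stabilizer_def)
      moreover have "affine_comp (affine_inv g0) g \<in> affine_stabilizer B"
        using h affine_comp_inv_left[OF assms] by simp
      ultimately show "g \<in> {g \<in> affine_group. affine_map g ` B = affine_map g0 ` B}"
        using affine_image_eq_iff_stabilizer[OF assms] by blast
    qed
  qed
  then show ?thesis
    by (rule bij_betw_same_card)
qed

lemma card_affine_maps_covering:
  fixes B :: "'a::{finite,field} set"
  shows "card {g \<in> affine_group. T \<subseteq> affine_map g ` B}
         = card (affine_stabilizer B) * card {X \<in> GA1_orbit B. T \<subseteq> X}"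
proof -
  let ?S = "{g \<in> affine_group. T \<subseteq> affine_map g ` B}"
  let ?Y = "{X \<in> GA1_orbit B. T \<subseteq> X}"
  have "(\<lambda>g. affine_map g ` B) ` ?S \<subseteq> ?Y"
    by (auto simp: GA1_orbit_eq_image)
  then have "card ?S = (\<Sum>X\<in>?Y. card {g \<in> ?S. affine_map g ` B = X})"
    using sum.group[of ?S ?Y "\<lambda>g. affine_map g ` B" "\<lambda>_. 1::nat"] by simp
  also have "\<dots> = (\<Sum>X\<in>?Y. card (affine_stabilizer B))"
  proof (rule sum.cong)
    fix X assume "X \<in> ?Y"
    then obtain g0 where g0: "g0 \<in> affine_group" "X = affine_map g0 ` B" "T \<subseteq> X"
      by (auto simp: GA1_orbit_eq_image)
    then have "{g \<in> ?S. affine_map g ` B = X}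
               = {g \<in> affine_group. affine_map g ` B = affine_map g0 ` B}"
      by auto
    then show "card {g \<in> ?S. affine_map g ` B = X} = card (affine_stabilizer B)"
      using card_affine_image_fiber[OF g0(1)] by simp
  qed simp
  finally show ?thesis
    by simp
qed

lemma card_affine_stabilizer_pos: "card (affine_stabilizer (B :: 'a::{finite,field} set)) > 0"
proof -
  have "(1, 0) \<in> affine_stabilizer B"
    by (simp add: affine_stabilizer_def affine_group_def affine_map_def)
  then show ?thesis
    using card_gt_0_iff finite by blast
qed

text \<open>For \<open>x \<noteq> 0\<close>, the pair \<open>(x, y)\<close> is the inverse of the affine map taking all \<open>u \<in> U\<close> into \<open>B\<close>.\<close>

lemma card_affine_incidences:
  fixes B U :: "'a::{finite,field} set"
  assumes "U \<noteq> {}"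
  shows "card {(x, y). \<forall>u\<in>U. u * x + y \<in> B}
         = card B + card {g \<in> affine_group. U \<subseteq> affine_map g ` B}"
proof -
  let ?P = "{(x, y). \<forall>u\<in>U. u * x + y \<in> B}"
  let ?N = "{p \<in> ?P. fst p \<noteq> 0}"
  have "card ?P = card {p \<in> ?P. fst p = 0} + card ?N"
    by (subst card_Un_disjoint[symmetric]) (auto intro: arg_cong[where f = card])
  moreover have "{p \<in> ?P. fst p = 0} = Pair 0 ` B"
    using assms by auto
  moreover have "?N = affine_inv ` {g \<in> affine_group. U \<subseteq> affine_map g ` B}"
  proof -
    have "?N = {g \<in> affine_group. \<forall>u\<in>U. affine_map g u \<in> B}"
      by (auto simp: affine_group_def affine_map_def mult.commute)
    also have "\<dots> = affine_inv ` {g \<in> affine_group. U \<subseteq> affine_map g ` B}"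
    proof (rule set_eqI)
      fix g
      show "g \<in> {g \<in> affine_group. \<forall>u\<in>U. affine_map g u \<in> B} \<longleftrightarrow>
            g \<in> affine_inv ` {g \<in> affine_group. U \<subseteq> affine_map g ` B}"
        using affine_inv_in_group affine_inv_inv mem_affine_image_iff
        by (smt (verit, best) image_iff mem_Collect_eq subset_iff)
    qed
    finally show ?thesis .
  qed
  moreover have "card (Pair 0 ` B) = card B"
    by (rule card_image) (simp add: inj_on_def)
  moreover have "card (affine_inv ` {g \<in> affine_group. U \<subseteq> affine_map g ` B})
                 = card {g \<in> affine_group. U \<subseteq> affine_map g ` B}"
    by (rule card_image, rule inj_onI) (metis (mono_tags) affine_inv_inv mem_Collect_eq)
  ultimately show ?thesis
    by simp
qed

lemma I_B_eq_blocks_through: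
  fixes B :: "'a::{finite,field} set"
  shows "I_B B u1 u2 u3
         = card B + card (affine_stabilizer B) * card {X \<in> GA1_orbit B. {u1, u2, u3} \<subseteq> X}"
proof -
  have "I_B B u1 u2 u3 = card {(x, y). \<forall>u\<in>{u1, u2, u3}. u * x + y \<in> B}"
    by (simp add: I_B_def)
  also have "\<dots> = card B + card {g \<in> affine_group. {u1, u2, u3} \<subseteq> affine_map g ` B}"
    by (rule card_affine_incidences) simp
  finally show ?thesis
    by (simp only: card_affine_maps_covering)
qed

lemma all_card_eq_3_iff:
  "(\<forall>T. card T = 3 \<longrightarrow> P T) \<longleftrightarrow> (\<forall>x y z. x \<noteq> y \<and> x \<noteq> z \<and> y \<noteq> z \<longrightarrow> P {x, y, z})"
  by (auto simp: card_3_iff)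

lemma ex_const_comp_inj_iff:
  assumes "inj f"
  shows "(\<exists>c. \<forall>x y z. P x y z \<longrightarrow> f (g x y z) = c) \<longleftrightarrow> (\<exists>l. \<forall>x y z. P x y z \<longrightarrow> g x y z = l)"
  using assms by (metis injD)

theorem lemma7:
  fixes B :: "'a::{finite,field} set" and n k :: nat
  assumes "card (UNIV :: 'a set) = 2 ^ n" and "card B = k" and "k \<ge> 3"
  shows "is_3_design (UNIV :: 'a set) (GA1_orbit B) k \<longleftrightarrow>
         (\<exists>c. \<forall>u1 u2 u3. u1 \<noteq> u2 \<and> u1 \<noteq> u3 \<and> u2 \<noteq> u3 \<longrightarrow> I_B B u1 u2 u3 = c)"
proof -
  define s where "s = card (affine_stabilizer B)"
  define blocks_through where "blocks_through T = card {X \<in> GA1_orbit B. T \<subseteq> X}" for T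
  have "s > 0"
    by (simp only: s_def card_affine_stabilizer_pos)
  then have "inj (\<lambda>m. k + s * m)"
    by (intro injI) simp
  have "is_3_design UNIV (GA1_orbit B) k \<longleftrightarrow> (\<exists>lam. \<forall>T. card T = 3 \<longrightarrow> blocks_through T = lam)"
    using card_GA1_orbit_member assms(2) by (auto simp: is_3_design_def blocks_through_def)
  also have "\<dots> \<longleftrightarrow> (\<exists>lam. \<forall>u1 u2 u3. u1 \<noteq> u2 \<and> u1 \<noteq> u3 \<and> u2 \<noteq> u3 \<longrightarrow>
                                      blocks_through {u1, u2, u3} = lam)"
    by (simp only: all_card_eq_3_iff)
  also have "\<dots> \<longleftrightarrow> (\<exists>c. \<forall>u1 u2 u3. u1 \<noteq> u2 \<and> u1 \<noteq> u3 \<and> u2 \<noteq> u3 \<longrightarrow>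
                                    k + s * blocks_through {u1, u2, u3} = c)"
    by (rule ex_const_comp_inj_iff[OF \<open>inj (\<lambda>m. k + s * m)\<close>, symmetric])
  also have "\<dots> \<longleftrightarrow> (\<exists>c. \<forall>u1 u2 u3. u1 \<noteq> u2 \<and> u1 \<noteq> u3 \<and> u2 \<noteq> u3 \<longrightarrow> I_B B u1 u2 u3 = c)"
    by (simp only: I_B_eq_blocks_through s_def blocks_through_def assms(2))
  finally show ?thesis .
qed

end
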